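(* Let $r>0$, $\varepsilon_0>0$, let $n\ge 0$ be an integer, and let $\varphi_0$ be an axially symmetric external potential, harmonic inside the ball of radius $r$ centered at the origin, whose values on the axis are a polynomial of degree $n$: \[ -\varphi_0(s)=\sum_{i=1}^{n+1} b_i s^{i-1}, \] and set $b_i=0$ for $i>n+1$. Let $\sigma$ be the polynomial of degree at most $n$ on $[-r,r]$ satisfying \[ \int_{-r}^{r}\frac{r\,\sigma(z)}{\sqrt{s^2+r^2-2sz}}\,dz=-2\varepsilon_0\,\varphi_0(s)\qquad(-r<s<r). \] Then for every integer $m\ge 0$ the dipole moment of order $m$, $\mathcal D_m=2\pi r\int_{-r}^{r}z^m\sigma(z)\,dz$, equals \[ \mathcal D_m=2\pi\varepsilon_0\, r^{m+1}\sum_{\substack{i=\delta\\ i\equiv \delta\ (\mathrm{mod}\ 2)}}^{m+1}(2i-1)\,r^{i-1}F_{i,m+1}\,b_i , \] where $\delta=1$ if $m$ is even and $\delta=2$ if $m$ is odd (the sum runs over $i=\delta,\delta+2,\dots$ up to $m+1$), and $F_{ij}=\int_{-1}^{1}P_{i-1}(\eta)\,\eta^{j-1}\,d\eta$ with $P_k$ the Legendre polynomial of degree $k$.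
   Context: Physical setting: a grounded conducting ball of radius $r$ centered at the origin on the axis of an axially symmetric external field with potential $\varphi_0$ ($\varphi_0(s)$ denotes its value at axial coordinate $s$); $\varepsilon_0$ is the electric constant; $\sigma(z)$ is the induced surface charge density as a function of the axial coordinate $z$, and the integral equation expresses cancellation of the external potential inside the ball. *)

theory Defs
  imports "HOL-Analysis.Analysis" "HOL-Computational_Algebra.Polynomial"
begin

fun legendreP :: "nat \<Rightarrow> real \<Rightarrow> real" where
  "legendreP 0 x = 1"
| "legendreP (Suc 0) x = x"
| "legendreP (Suc (Suc k)) x =
     ((2 * real k + 3) * x * legendreP (Suc k) x - (real k + 1) * legendreP k x) / (real k + 2)"

definition F :: "nat \<Rightarrow> nat \<Rightarrow> real" where
  "F i j = integral {-1..1} (\<lambda>\<eta>. legendreP (i - 1) \<eta> * \<eta> ^ (j - 1))"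

definition dipole :: "real \<Rightarrow> (real \<Rightarrow> real) \<Rightarrow> nat \<Rightarrow> real" where
  "dipole r \<sigma> m = 2 * pi * r * integral {-r..r} (\<lambda>z. z ^ m * \<sigma> z)"

end

theory Submission
  imports Defs "HOL-Analysis.FPS_Convergence" "HOL-Computational_Algebra.Polynomial_FPS"
begin

text \<open>The Legendre generating function sum_k P_k(x) t^k = 1 / sqrt (1 - 2 x t + t^2) expands the
  kernel r / sqrt (s^2 + r^2 - 2 s z) in powers of t = s / r. Integrating termwise turns the
  integral equation into an identity of power series in s, and comparing coefficients gives
  integral sigma(z) P_k(z / r) dz = 2 eps0 b_(k+1) r^k. On the other hand
  eta^m = sum_(k <= m) (2k + 1)/2 F_(k+1,m+1) P_k(eta), where F_(k+1,m+1) vanishes unless k and m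
  have the same parity. Substituting eta = z / r in the moment integral yields the formula.\<close>

lemma legendreP_Bonnet:
  "(real k + 1) * legendreP (k + 1) x + real k * legendreP (k - 1) x
     = (2 * real k + 1) * x * legendreP k x"
  by (cases k) (simp_all add: field_simps)

lemma continuous_on_legendreP: "continuous_on A (legendreP k)"
proof (induction k rule: less_induct)
  case (less k)
  consider "k = 0" | "k = Suc 0" | j where "k = Suc (Suc j)"
    by (metis not0_implies_Suc)
  then show ?case
  proof cases
    case 3
    then show ?thesis
      using less[of j] less[of "Suc j"] by (auto intro!: continuous_intros)
  qed (auto intro!: continuous_intros simp: fun_eq_iff)
qed

lemma continuous_on_mult_legendreP_scaled:
  "continuous_on A f \<Longrightarrow> continuous_on A (\<lambda>z. f z * legendreP k (z / r))"
  unfolding divide_inverse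
  by (intro continuous_intros continuous_on_compose2[OF continuous_on_legendreP[of UNIV]]) auto

lemma abs_legendreP_le: "\<bar>x\<bar> \<le> 1 \<Longrightarrow> \<bar>legendreP k x\<bar> \<le> 3 ^ k"
proof (induction k x rule: legendreP.induct)
  case (3 k x)
  have "\<bar>x * legendreP (Suc k) x\<bar> \<le> 1 * 3 ^ Suc k"
    unfolding abs_mult using 3 by (intro mult_mono) auto
  then have "\<bar>(2 * real k + 3) * x * legendreP (Suc k) x - (real k + 1) * legendreP k x\<bar>
      \<le> (2 * real k + 3) * 3 ^ Suc k + (real k + 1) * 3 ^ k"
    using 3 by (intro abs_triangle_ineq4[THEN order_trans] add_mono)
      (auto simp: abs_mult mult.assoc intro!: mult_left_mono)
  also have "\<dots> \<le> (real k + 2) * 3 ^ Suc (Suc k)"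
    by (simp add: algebra_simps)
  finally show ?case
    by (simp add: divide_le_eq mult.commute)
qed auto

definition legendre_fps :: "real \<Rightarrow> real fps" where
  "legendre_fps x = Abs_fps (\<lambda>k. legendreP k x)"

definition legendre_kernel_fps :: "real \<Rightarrow> real fps" where
  "legendre_kernel_fps x = fps_of_poly [:1, -2 * x, 1:]"

lemma legendre_kernel_fps_eq: "legendre_kernel_fps x = 1 - fps_const (2 * x) * fps_X + fps_X ^ 2"
  unfolding legendre_kernel_fps_def by (simp add: fps_of_poly_pCons algebra_simps power2_eq_square)

lemma legendre_fps_ode:
  "legendre_kernel_fps x * fps_deriv (legendre_fps x) = (fps_const x - fps_X) * legendre_fps x"
proof (rule fps_ext)
  fix n
  consider "n = 0" | "n = 1" | j where "n = Suc (Suc j)"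
    by (metis One_nat_def not0_implies_Suc)
  then show "fps_nth (legendre_kernel_fps x * fps_deriv (legendre_fps x)) n
      = fps_nth ((fps_const x - fps_X) * legendre_fps x) n"
  proof cases
    case 3
    then show ?thesis
      using legendreP_Bonnet[of "Suc (Suc j)" x]
      by (simp add: legendre_kernel_fps_eq legendre_fps_def algebra_simps fps_X_power_mult_nth
          del: legendreP.simps)
  qed (simp_all add: legendre_kernel_fps_eq legendre_fps_def field_simps fps_X_power_mult_nth)
qed

text \<open>The ODE gives \<open>(L\<^sup>2 Q)' = 2 L (Q L' - (x - X) L) = 0\<close>,
  so \<open>L\<^sup>2 Q\<close> is its constant term.\<close>
lemma legendre_fps_sq_kernel: "legendre_fps x ^ 2 * legendre_kernel_fps x = 1"
proof -
  have Q': "fps_deriv (legendre_kernel_fps x) = 2 * (fps_X - fps_const x)"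
    by (simp add: legendre_kernel_fps_eq power2_eq_square algebra_simps
        flip: fps_const_mult fps_numeral_fps_const)
  have "fps_deriv (legendre_fps x ^ 2 * legendre_kernel_fps x)
      = 2 * legendre_fps x * (legendre_kernel_fps x * fps_deriv (legendre_fps x))
        + legendre_fps x ^ 2 * fps_deriv (legendre_kernel_fps x)"
    by (simp add: power2_eq_square algebra_simps)
  also have "\<dots> = 0"
    unfolding legendre_fps_ode Q' by (simp add: power2_eq_square algebra_simps)
  finally have "legendre_fps x ^ 2 * legendre_kernel_fps x
      = fps_const (fps_nth (legendre_fps x ^ 2 * legendre_kernel_fps x) 0)"
    by (simp only: fps_deriv_eq_0_iff)
  then show ?thesis
    by (simp add: legendre_fps_def legendre_kernel_fps_def power2_eq_square)
qed

lemma summable_legendreP_powser: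
  assumes "\<bar>x\<bar> \<le> 1" "\<bar>t\<bar> < 1/3"
  shows "summable (\<lambda>k. legendreP k x * t ^ k)"
proof (rule summable_comparison_test)
  show "\<exists>N. \<forall>k\<ge>N. norm (legendreP k x * t ^ k) \<le> (3 * \<bar>t\<bar>) ^ k"
    using assms by (auto simp: abs_mult power_abs power_mult_distrib
        intro!: mult_right_mono abs_legendreP_le)
  show "summable (\<lambda>k. (3 * \<bar>t\<bar>) ^ k)"
    using assms by (intro summable_geometric) auto
qed

lemma norm_less_fps_conv_radius_legendre_fps:
  fixes t :: real
  assumes "\<bar>x\<bar> \<le> 1" "\<bar>t\<bar> < 1/3"
  shows "norm t < fps_conv_radius (legendre_fps x)"
proof -
  have "fps_conv_radius (legendre_fps x) \<ge> ereal (1/3)"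
    unfolding fps_conv_radius_def legendre_fps_def
    by (intro conv_radius_geI_ex') (auto intro!: summable_legendreP_powser assms(1))
  moreover have "ereal (norm t) < ereal (1/3)"
    using assms(2) by simp
  ultimately show ?thesis
    by (rule order.strict_trans2[rotated])
qed

lemma eval_legendre_fps_sq:
  assumes x: "\<bar>x\<bar> \<le> 1" and t: "\<bar>t\<bar> < 1/3"
  shows "eval_fps (legendre_fps x) t ^ 2 * (1 - 2 * x * t + t ^ 2) = 1"
proof -
  have L: "norm t < fps_conv_radius (legendre_fps x)"
    using x t by (rule norm_less_fps_conv_radius_legendre_fps)
  then have "norm t < fps_conv_radius (legendre_fps x ^ 2)"
    using fps_conv_radius_power order.strict_trans2 by blast
  then have "eval_fps (legendre_fps x ^ 2 * legendre_kernel_fps x) t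
      = eval_fps (legendre_fps x ^ 2) t * eval_fps (legendre_kernel_fps x) t"
    by (rule eval_fps_mult) (simp add: legendre_kernel_fps_def)
  also have "\<dots> = eval_fps (legendre_fps x) t ^ 2 * (1 - 2 * x * t + t ^ 2)"
    unfolding eval_fps_power[OF L]
    by (simp add: legendre_kernel_fps_def algebra_simps power2_eq_square)
  finally have "eval_fps (legendre_fps x ^ 2 * legendre_kernel_fps x) t
      = eval_fps (legendre_fps x) t ^ 2 * (1 - 2 * x * t + t ^ 2)" .
  then show ?thesis
    by (simp add: legendre_fps_sq_kernel)
qed

lemma legendreP_generating_function:
  assumes x: "\<bar>x\<bar> \<le> 1" and t: "\<bar>t\<bar> < 1/3"
  shows "(\<lambda>k. legendreP k x * t ^ k) sums (1 / sqrt (1 - 2 * x * t + t ^ 2))"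
proof -
  define g where "g = eval_fps (legendre_fps x)"
  have segment: "closed_segment 0 t \<subseteq> eball 0 (fps_conv_radius (legendre_fps x))"
  proof
    fix u assume "u \<in> closed_segment 0 t"
    then have "\<bar>u\<bar> < 1/3"
      using t by (auto simp: closed_segment_eq_real_ivl split: if_splits)
    then show "u \<in> eball 0 (fps_conv_radius (legendre_fps x))"
      using norm_less_fps_conv_radius_legendre_fps[OF x] by simp
  qed
  have nonzero: "g u \<noteq> 0" if "u \<in> closed_segment 0 t" for u
    using eval_legendre_fps_sq[OF x, of u] that t
    by (auto simp: g_def closed_segment_eq_real_ivl split: if_splits)
  \<comment> \<open>\<open>g\<^sup>2 = 1 / (1 - 2 x t + t\<^sup>2)\<close>; continuity and \<open>g 0 = 1\<close> select the positive root.\<close>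
  have "g t > 0"
  proof (rule ccontr)
    assume "\<not> g t > 0"
    moreover have "g 0 = 1"
      by (simp add: g_def eval_fps_at_0 legendre_fps_def)
    ultimately have "0 \<in> closed_segment (g 0) (g t)"
      by (auto simp: closed_segment_eq_real_ivl)
    moreover have "continuous_on (closed_segment 0 t) g"
      unfolding g_def using continuous_on_subset[OF continuous_on_eval_fps segment] .
    ultimately show False
      using IVT'_closed_segment_real nonzero by blast
  qed
  moreover have "1 - 2 * x * t + t ^ 2 = (1 / g t) ^ 2"
    using eval_legendre_fps_sq[OF x t] \<open>g t > 0\<close> by (simp add: g_def field_simps)
  ultimately have "g t = 1 / sqrt (1 - 2 * x * t + t ^ 2)"
    by simp
  moreover have "(\<lambda>k. legendreP k x * t ^ k) sums g t"
    using summable_legendreP_powser[OF x t]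
    by (simp add: g_def eval_fps_def legendre_fps_def summable_sums)
  ultimately show ?thesis
    by simp
qed

lemma legendre_integral_series:
  fixes f :: "real \<Rightarrow> real"
  assumes r: "r > 0" and f: "continuous_on {-r..r} f" and t: "\<bar>t\<bar> < 1/3"
  shows "(\<lambda>k. integral {-r..r} (\<lambda>z. f z * legendreP k (z / r)) * t ^ k)
           sums integral {-r..r} (\<lambda>z. f z / sqrt (1 - 2 * (z / r) * t + t ^ 2))"
proof -
  define S where "S N z = (\<Sum>k<N. f z * legendreP k (z / r) * t ^ k)" for N z
  obtain M where M: "\<And>z. z \<in> {-r..r} \<Longrightarrow> \<bar>f z\<bar> \<le> M"
    using compact_imp_bounded[OF compact_continuous_image[OF f compact_Icc]]
    unfolding bounded_iff by (metis image_eqI real_norm_def)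
  have unit: "\<bar>z / r\<bar> \<le> 1" if "z \<in> {-r..r}" for z
    using that r by (auto simp: abs_le_iff divide_le_eq)
  have bound: "norm (S N z) \<le> M / (1 - 3 * \<bar>t\<bar>)" if z: "z \<in> {-r..r}" for N z
  proof -
    have M0: "0 \<le> M"
      using M[OF z] by linarith
    have "\<bar>f z * legendreP k (z / r) * t ^ k\<bar> \<le> M * (3 * \<bar>t\<bar>) ^ k" for k
      unfolding abs_mult power_abs power_mult_distrib mult.assoc
      using M[OF z] abs_legendreP_le[OF unit[OF z]] M0
      by (intro mult_mono mult_right_mono) auto
    then have "norm (S N z) \<le> (\<Sum>k<N. M * (3 * \<bar>t\<bar>) ^ k)"
      unfolding S_def real_norm_def by (intro sum_abs[THEN order_trans] sum_mono)
    also have "\<dots> = M * (\<Sum>k<N. (3 * \<bar>t\<bar>) ^ k)"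
      by (simp add: sum_distrib_left)
    also have "\<dots> \<le> M * (\<Sum>k. (3 * \<bar>t\<bar>) ^ k)"
      using summable_geometric[of "3 * \<bar>t\<bar>"] t
      by (intro mult_left_mono[OF _ M0] sum_le_suminf) simp_all
    also have "\<dots> = M / (1 - 3 * \<bar>t\<bar>)"
      using t by (subst suminf_geometric) auto
    finally show ?thesis .
  qed
  have limit: "(\<lambda>N. S N z) \<longlonglongrightarrow> f z / sqrt (1 - 2 * (z / r) * t + t ^ 2)"
    if "z \<in> {-r..r}" for z
    using tendsto_mult_left[OF legendreP_generating_function[OF unit[OF that] t,
          unfolded sums_def], of "f z"]
    by (simp add: S_def sum_distrib_left mult.assoc)
  have term_integrable: "(\<lambda>z. f z * legendreP k (z / r) * t ^ k) integrable_on {-r..r}" for k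
    by (intro integrable_continuous_interval continuous_on_mult_right
        continuous_on_mult_legendreP_scaled f)
  have "(\<lambda>N. integral {-r..r} (S N))
      \<longlonglongrightarrow> integral {-r..r} (\<lambda>z. f z / sqrt (1 - 2 * (z / r) * t + t ^ 2))"
    by (rule dominated_convergence(2)[OF _ integrable_const_ivl bound limit])
      (simp_all add: S_def integrable_sum term_integrable)
  moreover have "integral {-r..r} (S N)
      = (\<Sum>k<N. integral {-r..r} (\<lambda>z. f z * legendreP k (z / r)) * t ^ k)" for N
    unfolding S_def by (simp add: integral_sum term_integrable)
  ultimately show ?thesis
    by (simp add: sums_def)
qed

lemma powser_zero_imp_coeffs_zero:
  fixes a :: "nat \<Rightarrow> real"
  assumes "\<delta> > 0"
    and "\<And>t. t \<noteq> 0 \<Longrightarrow> \<bar>t\<bar> < \<delta> \<Longrightarrow> (\<lambda>k. a k * t ^ k) sums 0"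
  shows "a k = 0"
proof -
  have head: "c 0 = 0"
    if "\<And>t. t \<noteq> 0 \<Longrightarrow> \<bar>t\<bar> < \<delta> \<Longrightarrow> (\<lambda>k. c k * t ^ k) sums 0" for c
  proof -
    have "((\<lambda>_. 0) \<longlongrightarrow> c 0) (at (0::real))"
      by (rule powser_limit_0_strong[OF assms(1)]) (use that in simp)
    then show ?thesis
      by (rule LIM_const_eq[symmetric])
  qed
  show ?thesis
    using assms(2)
  proof (induction k arbitrary: a)
    case 0
    then show ?case
      by (rule head)
  next
    case (Suc k)
    have "a 0 = 0"
      using Suc.prems by (rule head)
    have "(\<lambda>j. a (Suc j) * t ^ j) sums 0" if "t \<noteq> 0" "\<bar>t\<bar> < \<delta>" for t
    proof -
      have "(\<lambda>j. t * (a (Suc j) * t ^ j)) sums 0"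
        using Suc.prems[OF that] \<open>a 0 = 0\<close> sums_Suc_iff[of "\<lambda>j. a j * t ^ j"]
        by (simp add: mult_ac)
      from sums_mult_D[OF this that(1)] show ?thesis
        by simp
    qed
    then show ?case
      by (rule Suc.IH)
  qed
qed

lemma powser_coeffs_unique:
  fixes a c :: "nat \<Rightarrow> real"
  assumes "\<delta> > 0"
    and "\<And>t. t \<noteq> 0 \<Longrightarrow> \<bar>t\<bar> < \<delta> \<Longrightarrow> (\<lambda>k. a k * t ^ k) sums S t"
    and "\<And>t. t \<noteq> 0 \<Longrightarrow> \<bar>t\<bar> < \<delta> \<Longrightarrow> (\<lambda>k. c k * t ^ k) sums S t"
  shows "a k = c k"
proof -
  have "(\<lambda>k. (a k - c k) * t ^ k) sums 0" if "t \<noteq> 0" "\<bar>t\<bar> < \<delta>" for t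
    using sums_diff[OF assms(2)[OF that] assms(3)[OF that]] by (simp add: left_diff_distrib)
  then have "a k - c k = 0"
    by (rule powser_zero_imp_coeffs_zero[OF assms(1)])
  then show ?thesis
    by simp
qed

lemma integral_legendre_kernel:
  assumes t: "t \<noteq> 0" "\<bar>t\<bar> < 1"
  shows "integral {-1..1} (\<lambda>x. 1 / sqrt (1 - 2 * x * t + t ^ 2)) = 2"
proof -
  define G where "G x = - sqrt (1 - 2 * x * t + t ^ 2) / t" for x
  have pos: "1 - 2 * x * t + t ^ 2 > 0" if "x \<in> {-1..1}" for x
  proof -
    have "\<bar>x\<bar> \<le> 1"
      using that by auto
    then have "x * t \<le> \<bar>t\<bar>"
      using abs_ge_self[of "x * t"] mult_left_le_one_le[of "\<bar>t\<bar>" "\<bar>x\<bar>"]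
      by (simp add: abs_mult)
    moreover have "0 < (1 - \<bar>t\<bar>) ^ 2"
      using t by simp
    moreover have "(1 - \<bar>t\<bar>) ^ 2 = 1 - 2 * \<bar>t\<bar> + t ^ 2"
      by (simp add: power2_diff)
    ultimately show ?thesis
      by linarith
  qed
  have "((\<lambda>x. 1 / sqrt (1 - 2 * x * t + t ^ 2)) has_integral G 1 - G (-1)) {-1..1}"
  proof (rule fundamental_theorem_of_calculus)
    fix x :: real assume "x \<in> {-1..1}"
    then show "(G has_vector_derivative 1 / sqrt (1 - 2 * x * t + t ^ 2)) (at x within {-1..1})"
      unfolding G_def has_real_derivative_iff_has_vector_derivative[symmetric]
      using pos[of x] t
      by (auto intro!: derivative_eq_intros DERIV_real_sqrt simp: field_simps)
  qed simp
  moreover have "G 1 - G (-1) = 2"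
  proof -
    have "1 - 2 * t + t ^ 2 = (1 - t) ^ 2" "1 + 2 * t + t ^ 2 = (1 + t) ^ 2"
      by (simp_all add: power2_diff power2_sum)
    then have "sqrt (1 - 2 * t + t ^ 2) = 1 - t" "sqrt (1 + 2 * t + t ^ 2) = 1 + t"
      using t by simp_all
    then show ?thesis
      using t by (simp add: G_def field_simps)
  qed
  ultimately show ?thesis
    by (simp add: integral_unique)
qed

lemma integral_legendreP: "integral {-1..1} (legendreP k) = (if k = 0 then 2 else 0)"
proof (rule powser_coeffs_unique[where \<delta> = "1/3" and S = "\<lambda>_. 2"
      and a = "\<lambda>k. integral {-1..1} (legendreP k)" and c = "\<lambda>k. if k = 0 then 2 else 0"])
  fix t :: real assume t: "t \<noteq> 0" "\<bar>t\<bar> < 1/3"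
  show "(\<lambda>k. integral {-1..1} (legendreP k) * t ^ k) sums 2"
    using legendre_integral_series[of 1 "\<lambda>_. 1" t] integral_legendre_kernel[of t] t
    by simp
  show "(\<lambda>k. (if k = 0 then 2 else 0) * t ^ k) sums 2"
  proof -
    have "(\<lambda>k. (if k = 0 then 2 else 0) * t ^ k) = (\<lambda>k. if k = 0 then 2 else 0)"
      by auto
    then show ?thesis
      using sums_single[of 0 "\<lambda>_. 2::real"] by simp
  qed
qed simp

definition legendre_moment :: "nat \<Rightarrow> nat \<Rightarrow> real" where
  "legendre_moment k m = integral {-1..1} (\<lambda>x. legendreP k x * x ^ m)"

lemma F_eq_legendre_moment: "F (Suc k) (Suc m) = legendre_moment k m"
  by (simp add: F_def legendre_moment_def)

lemma legendre_moment_integrable: "(\<lambda>x. legendreP k x * x ^ m) integrable_on {-1..1}"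
  by (intro integrable_continuous_interval continuous_intros continuous_on_legendreP)

lemma legendre_moment_Suc:
  "(2 * real k + 1) * legendre_moment k (Suc m)
     = real k * legendre_moment (k - 1) m + (real k + 1) * legendre_moment (k + 1) m"
proof -
  have "(2 * real k + 1) * (legendreP k x * x ^ Suc m)
      = real k * (legendreP (k - 1) x * x ^ m) + (real k + 1) * (legendreP (k + 1) x * x ^ m)" for x
  proof -
    have "(2 * real k + 1) * (legendreP k x * x ^ Suc m)
        = (2 * real k + 1) * x * legendreP k x * x ^ m"
      by (simp add: algebra_simps)
    also have "\<dots> = ((real k + 1) * legendreP (k + 1) x + real k * legendreP (k - 1) x) * x ^ m"
      by (simp only: legendreP_Bonnet)
    finally show ?thesis
      by (simp add: algebra_simps)
  qed
  then show ?thesis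
    unfolding legendre_moment_def
    by (simp add: integral_add integrable_on_mult_right legendre_moment_integrable
        flip: integral_mult_right)
qed

text \<open>Only \<open>\<integral> P\<^sub>k = 2 [k = 0]\<close> is needed: Bonnet's recursion then propagates the
  vanishing from \<open>m\<close> to \<open>m + 1\<close>, which avoids any orthogonality argument.\<close>
lemma legendre_moment_eq_0: "m < k \<or> odd (k + m) \<Longrightarrow> legendre_moment k m = 0"
proof (induction m arbitrary: k)
  case 0
  then show ?case
    using odd_pos by (auto simp: legendre_moment_def integral_legendreP)
next
  case (Suc m)
  show ?case
  proof (cases k)
    case 0
    then show ?thesis
      using legendre_moment_Suc[of 0 m] Suc by simp
  next
    case (Suc j)
    then have "legendre_moment j m = 0" "legendre_moment (k + 1) m = 0"
      using Suc.prems by (auto intro!: Suc.IH)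
    then show ?thesis
      using legendre_moment_Suc[of k m] Suc by simp
  qed
qed

lemma power_eq_legendre_expansion:
  "x ^ m = (\<Sum>k\<le>m. (2 * real k + 1) / 2 * legendre_moment k m * legendreP k x)"
proof (induction m)
  case 0
  have "legendre_moment 0 0 = 2"
    by (simp add: legendre_moment_def integral_legendreP)
  then show ?case
    by simp
next
  case (Suc m)
  define c where "c k = legendre_moment k m / 2" for k
  define up where "up k = real k * c (k - 1) * legendreP k x" for k
  define down where "down k = real k * c k * legendreP (k - 1) x" for k
  have "x ^ Suc m = (\<Sum>k\<le>m. c k * ((2 * real k + 1) * x * legendreP k x))"
    unfolding power_Suc Suc.IH sum_distrib_left
    by (intro sum.cong refl) (simp add: c_def field_simps)
  also have "\<dots> = (\<Sum>k\<le>m. up (k + 1)) + (\<Sum>k\<le>m. down k)"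
    by (simp add: flip: legendreP_Bonnet sum.distrib)
      (simp add: up_def down_def algebra_simps)
  also have "(\<Sum>k\<le>m. up (k + 1)) = (\<Sum>k\<le>Suc m. up k)"
    unfolding sum.atMost_Suc_shift[of up] by (simp add: up_def)
  also have "(\<Sum>k\<le>m. down k) = (\<Sum>k\<le>Suc m. down (k + 1))"
  proof -
    have "c (Suc m) = 0" "c (Suc (Suc m)) = 0"
      by (simp_all add: c_def legendre_moment_eq_0)
    then have "(\<Sum>k\<le>m. down k) = (\<Sum>k\<le>Suc (Suc m). down k)"
      by (simp add: down_def)
    then show ?thesis
      unfolding sum.atMost_Suc_shift[of down "Suc m"] by (simp add: down_def)
  qed
  also have "(\<Sum>k\<le>Suc m. up k) + (\<Sum>k\<le>Suc m. down (k + 1))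
      = (\<Sum>k\<le>Suc m. (2 * real k + 1) / 2 * legendre_moment k (Suc m) * legendreP k x)"
    unfolding sum.distrib[symmetric]
  proof (intro sum.cong refl)
    fix k
    have "(2 * real k + 1) / 2 * legendre_moment k (Suc m)
        = real k * c (k - 1) + (real k + 1) * c (k + 1)"
      using legendre_moment_Suc[of k m] by (simp add: c_def field_simps)
    then show "up k + down (k + 1)
        = (2 * real k + 1) / 2 * legendre_moment k (Suc m) * legendreP k x"
      by (simp add: up_def down_def algebra_simps)
  qed
  finally show ?case .
qed

lemma integral_legendreP_eq_potential_coeff:
  fixes f :: "real \<Rightarrow> real" and c :: "nat \<Rightarrow> real"
  assumes r: "r > 0" and f: "continuous_on {-r..r} f"
    and c: "\<And>k. N \<le> k \<Longrightarrow> c k = 0"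
    and potential: "\<And>s. s \<in> {-r<..<r} \<Longrightarrow>
      integral {-r..r} (\<lambda>z. r * f z / sqrt (s\<^sup>2 + r\<^sup>2 - 2 * s * z)) = (\<Sum>k<N. c k * s ^ k)"
  shows "integral {-r..r} (\<lambda>z. f z * legendreP k (z / r)) = c k * r ^ k"
proof (rule powser_coeffs_unique[where \<delta> = "1/3" and S = "\<lambda>t. \<Sum>k<N. c k * (r * t) ^ k"
      and a = "\<lambda>k. integral {-r..r} (\<lambda>z. f z * legendreP k (z / r))"
      and c = "\<lambda>k. c k * r ^ k"])
  fix t :: real assume t: "t \<noteq> 0" "\<bar>t\<bar> < 1/3"
  have "\<bar>r * t\<bar> < r"
    using r t by (simp add: abs_mult)
  then have "r * t \<in> {-r<..<r}"
    by (auto simp: abs_less_iff)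
  moreover have "r * f z / sqrt ((r * t)\<^sup>2 + r\<^sup>2 - 2 * (r * t) * z)
      = f z / sqrt (1 - 2 * (z / r) * t + t ^ 2)" for z
  proof -
    have "(r * t)\<^sup>2 + r\<^sup>2 - 2 * (r * t) * z = r\<^sup>2 * (1 - 2 * (z / r) * t + t ^ 2)"
      using r by (simp add: field_simps power2_eq_square)
    then show ?thesis
      using r by (simp add: real_sqrt_mult)
  qed
  ultimately show "(\<lambda>k. integral {-r..r} (\<lambda>z. f z * legendreP k (z / r)) * t ^ k)
      sums (\<Sum>k<N. c k * (r * t) ^ k)"
    using legendre_integral_series[OF r f t(2)] potential[of "r * t"] by simp
  show "(\<lambda>k. c k * r ^ k * t ^ k) sums (\<Sum>k<N. c k * (r * t) ^ k)"
    using sums_finite[of "{..<N}" "\<lambda>k. c k * r ^ k * t ^ k"] c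
    by (simp add: power_mult_distrib mult.assoc not_less)
qed simp

lemma dipole_eq_legendre_sum:
  assumes r: "r > 0" and f: "continuous_on {-r..r} f"
  shows "dipole r f m = 2 * pi * r ^ (m + 1) * (\<Sum>k\<le>m. (2 * real k + 1) / 2 * legendre_moment k m
           * integral {-r..r} (\<lambda>z. f z * legendreP k (z / r)))"
proof -
  have "z ^ m * f z = (\<Sum>k\<le>m. r ^ m * ((2 * real k + 1) / 2 * legendre_moment k m)
           * (f z * legendreP k (z / r)))" for z
  proof -
    have "z ^ m = r ^ m * (z / r) ^ m"
      using r by (simp add: power_divide)
    then show ?thesis
      by (subst (asm) power_eq_legendre_expansion)
        (simp add: sum_distrib_left sum_distrib_right algebra_simps)
  qed
  then have "integral {-r..r} (\<lambda>z. z ^ m * f z) = (\<Sum>k\<le>m. r ^ m * ((2 * real k + 1) / 2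
      * legendre_moment k m) * integral {-r..r} (\<lambda>z. f z * legendreP k (z / r)))"
    by (simp add: integral_sum integrable_on_mult_right integrable_continuous_interval
        continuous_on_mult_legendreP_scaled f)
  then show ?thesis
    by (simp add: dipole_def sum_distrib_left algebra_simps)
qed

text \<open>The index set is \<open>{\<delta>, \<delta> + 2, \<dots>} \<inter> {..m + 1} = {k + 1 | k. k \<le> m \<and> even (k + m)}\<close>.\<close>
lemma sum_same_parity_indices:
  fixes g :: "nat \<Rightarrow> real"
  assumes "\<And>k. k \<le> m \<Longrightarrow> odd (k + m) \<Longrightarrow> g (Suc k) = 0"
  shows "(\<Sum>i \<in> {i \<in> {(if even m then 1 else 2)..m + 1}.
              i mod 2 = (if even m then 1 else 2) mod 2}. g i)
      = (\<Sum>k\<le>m. g (Suc k))"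
    (is "(\<Sum>i \<in> ?I. g i) = _")
proof -
  have "(\<Sum>i \<in> ?I. g i) = (\<Sum>i \<in> {1..Suc m}. g i)"
  proof (rule sum.mono_neutral_left)
    show "\<forall>i \<in> {1..Suc m} - ?I. g i = 0"
    proof
      fix i assume "i \<in> {1..Suc m} - ?I"
      then have i: "1 \<le> i" "i \<le> Suc m"
        and "\<not> ((if even m then 1 else 2) \<le> i \<and> i mod 2 = (if even m then 1 else 2) mod 2)"
        by auto
      then have "odd (i - 1 + m)"
        by (cases "even m") (simp_all, presburger+)
      then show "g i = 0"
        using assms[of "i - 1"] i by simp
    qed
  qed auto
  also have "\<dots> = (\<Sum>k\<le>m. g (Suc k))"
    using sum.shift_bounds_cl_Suc_ivl[of g 0 m] by (simp add: atLeast0AtMost)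
  finally show ?thesis .
qed

theorem theorem2:
  fixes r \<epsilon>0 :: real and n :: nat and b :: "nat \<Rightarrow> real"
    and \<phi>0 :: "real \<Rightarrow> real" and \<sigma> :: "real poly"
  assumes r_pos: "r > 0" and eps_pos: "\<epsilon>0 > 0"
    and b_deg: "b (n + 1) \<noteq> 0"
    and b_zero: "\<And>i. i > n + 1 \<Longrightarrow> b i = 0"
    and phi_axis: "\<And>s. s \<in> {-r<..<r} \<Longrightarrow> - \<phi>0 s = (\<Sum>i=1..n+1. b i * s ^ (i - 1))"
    and sigma_deg: "degree \<sigma> \<le> n"
    and integral_eq: "\<And>s. s \<in> {-r<..<r} \<Longrightarrow>
        integral {-r..r} (\<lambda>z. r * poly \<sigma> z / sqrt (s\<^sup>2 + r\<^sup>2 - 2 * s * z))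
          = - 2 * \<epsilon>0 * \<phi>0 s"
  shows "\<forall>m::nat. dipole r (poly \<sigma>) m =
     2 * pi * \<epsilon>0 * r ^ (m + 1) *
       (\<Sum>i \<in> {i \<in> {(if even m then 1 else 2)..m + 1}.
                    i mod 2 = (if even m then 1 else 2) mod 2}.
          (2 * real i - 1) * r ^ (i - 1) * F i (m + 1) * b i)"
proof
  \<comment> \<open>Only the continuity of \<open>\<sigma>\<close> matters.\<close>
  fix m
  have cont: "continuous_on {-r..r} (poly \<sigma>)"
    by (intro continuous_intros)
  have "- 2 * \<epsilon>0 * \<phi>0 s = (\<Sum>k<n + 1. 2 * \<epsilon>0 * b (k + 1) * s ^ k)"
    if "s \<in> {-r<..<r}" for s
  proof -
    have "- 2 * \<epsilon>0 * \<phi>0 s = 2 * \<epsilon>0 * (\<Sum>i=1..n+1. b i * s ^ (i - 1))"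
      unfolding phi_axis[OF that, symmetric] by simp
    also have "\<dots> = (\<Sum>k<n + 1. 2 * \<epsilon>0 * b (k + 1) * s ^ k)"
      by (simp add: sum.atLeast1_atMost_eq sum_distrib_left distrib_left mult.assoc)
    finally show ?thesis .
  qed
  then have coeff: "integral {-r..r} (\<lambda>z. poly \<sigma> z * legendreP k (z / r))
      = 2 * \<epsilon>0 * b (k + 1) * r ^ k" for k
    using b_zero integral_eq
    by (intro integral_legendreP_eq_potential_coeff[OF r_pos cont, of "n + 1"]) auto
  show "dipole r (poly \<sigma>) m = 2 * pi * \<epsilon>0 * r ^ (m + 1) *
       (\<Sum>i \<in> {i \<in> {(if even m then 1 else 2)..m + 1}.
                    i mod 2 = (if even m then 1 else 2) mod 2}.
          (2 * real i - 1) * r ^ (i - 1) * F i (m + 1) * b i)"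
    unfolding dipole_eq_legendre_sum[OF r_pos cont] coeff
    by (subst sum_same_parity_indices)
      (auto simp: F_eq_legendre_moment legendre_moment_eq_0 sum_distrib_left algebra_simps
        intro!: sum.cong)
qed

end
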